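(* Let $E$ be a complex Banach lattice and let $A: E \supseteq D(A) \to E$ be a densely defined, closed, real linear operator. Let $u \in E_+$, let $\varphi \in E'_+$ be strictly positive, and assume $D(A)\subseteq E_u$ and $D(A')\subseteq (E')_\varphi$. Let $\mu_0$ be a real number in $\rho(A)$. (a) $R(\mu_0,A)\succeq -u\otimes\varphi$ if and only if $R(\mu,A)\succeq -u\otimes\varphi$ for all real $\mu\in\rho(A)$. (b) $R(\mu_0,A)\preceq u\otimes\varphi$ if and only if $R(\mu,A)\preceq u\otimes\varphi$ for all real $\mu\in\rho(A)$.
   Context: $E_{\mathbb{R}}$ denotes the real part of $E$. A linear operator $A$ is real if $D(A) = (D(A)\cap E_{\mathbb{R}}) + i(D(A)\cap E_{\mathbb{R}})$ and $A$ maps $D(A)\cap E_{\mathbb{R}}$ into $E_{\mathbb{R}}$. $R(\mu,A) = (\mu - A)^{-1}$. For bounded real operators, $T\succeq S$ (equivalently $S\preceq T$) means $T - cS$ maps $E_+$ into $E_+$ for some $c>0$. $u\otimes\varphi$ is $f\mapsto\langle\varphi,f\rangle u$. $\varphi$ strictly positive: $\langle\varphi,f\rangle>0$ for all $0\ne f\in E_+$. $E_u = \{x : |x|\le cu \text{ for some } c\ge0\}$; $(E')_\varphi = \{x'\in E' : |x'|\le c\varphi \text{ for some } c\ge 0\}$. *)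

theory Defs
  imports "HOL-Analysis.Analysis"
begin

class banach_lattice = banach + ordered_real_vector + lattice +
  assumes lattice_norm: "sup x (- x) \<le> sup y (- y) \<Longrightarrow> norm x \<le> norm y"

text \<open>The complex Banach lattice E is the complexification of the real Banach lattice
  E_R = 'a; an element x + i y is represented by the pair (x, y).  The topology of E is
  the product topology (equivalent to the complex lattice norm topology).\<close>

definition cscale :: "complex \<Rightarrow> 'a::real_vector \<times> 'a \<Rightarrow> 'a \<times> 'a" where
  "cscale c x = (Re c *\<^sub>R fst x - Im c *\<^sub>R snd x, Re c *\<^sub>R snd x + Im c *\<^sub>R fst x)"

definition realpart :: "('a::banach_lattice \<times> 'a) set" where
  "realpart = {(y, 0) | y. True}"

definition poscone :: "('a::banach_lattice \<times> 'a) set" where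
  "poscone = {(y, 0) | y. 0 \<le> y}"

definition lmod :: "'a::banach_lattice \<times> 'a \<Rightarrow> 'a" where
  "lmod x = (THE m. (\<forall>t::real. cos t *\<^sub>R fst x + sin t *\<^sub>R snd x \<le> m) \<and>
                    (\<forall>m'. (\<forall>t::real. cos t *\<^sub>R fst x + sin t *\<^sub>R snd x \<le> m') \<longrightarrow> m \<le> m'))"

definition pideal :: "'a::banach_lattice \<Rightarrow> ('a \<times> 'a) set" where
  "pideal u = {x. \<exists>c\<ge>0. lmod x \<le> c *\<^sub>R u}"

definition lin_op :: "('a::banach_lattice \<times> 'a) set \<Rightarrow> ('a \<times> 'a \<Rightarrow> 'a \<times> 'a) \<Rightarrow> bool" where
  "lin_op D A \<longleftrightarrow> 0 \<in> D \<and>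
     (\<forall>x\<in>D. \<forall>y\<in>D. x + y \<in> D \<and> A (x + y) = A x + A y) \<and>
     (\<forall>c x. x \<in> D \<longrightarrow> cscale c x \<in> D \<and> A (cscale c x) = cscale c (A x))"

definition densely_defined :: "('a::banach_lattice \<times> 'a) set \<Rightarrow> bool" where
  "densely_defined D \<longleftrightarrow> closure D = UNIV"

definition closed_op :: "('a::banach_lattice \<times> 'a) set \<Rightarrow> ('a \<times> 'a \<Rightarrow> 'a \<times> 'a) \<Rightarrow> bool" where
  "closed_op D A \<longleftrightarrow> closed {(x, A x) | x. x \<in> D}"

definition real_op :: "('a::banach_lattice \<times> 'a) set \<Rightarrow> ('a \<times> 'a \<Rightarrow> 'a \<times> 'a) \<Rightarrow> bool" where
  "real_op D A \<longleftrightarrow>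
     D = {p + cscale \<i> q | p q. p \<in> D \<inter> realpart \<and> q \<in> D \<inter> realpart} \<and>
     (\<forall>x \<in> D \<inter> realpart. A x \<in> realpart)"

definition resolvent :: "complex \<Rightarrow> ('a::banach_lattice \<times> 'a) set \<Rightarrow> ('a \<times> 'a \<Rightarrow> 'a \<times> 'a)
    \<Rightarrow> 'a \<times> 'a \<Rightarrow> 'a \<times> 'a" where
  "resolvent \<mu> D A y = (THE x. x \<in> D \<and> cscale \<mu> x - A x = y)"

definition resolvent_set :: "('a::banach_lattice \<times> 'a) set \<Rightarrow> ('a \<times> 'a \<Rightarrow> 'a \<times> 'a) \<Rightarrow> complex set" where
  "resolvent_set D A = {\<mu>. bij_betw (\<lambda>x. cscale \<mu> x - A x) D UNIV \<and>
      (\<exists>K. \<forall>y. norm (resolvent \<mu> D A y) \<le> K * norm y)}"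

definition cdual :: "('a::banach_lattice \<times> 'a \<Rightarrow> complex) set" where
  "cdual = {f. continuous_on UNIV f \<and> (\<forall>x y. f (x + y) = f x + f y) \<and>
                (\<forall>c x. f (cscale c x) = c * f x)}"

definition adj_dom :: "('a::banach_lattice \<times> 'a) set \<Rightarrow> ('a \<times> 'a \<Rightarrow> 'a \<times> 'a)
    \<Rightarrow> ('a \<times> 'a \<Rightarrow> complex) set" where
  "adj_dom D A = {f \<in> cdual. \<exists>g \<in> cdual. \<forall>x \<in> D. f (A x) = g x}"

definition pos_functional :: "('a::banach_lattice \<times> 'a \<Rightarrow> complex) \<Rightarrow> bool" where
  "pos_functional f \<longleftrightarrow> f \<in> cdual \<and> (\<forall>x \<in> poscone. Im (f x) = 0 \<and> Re (f x) \<ge> 0)"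

definition strictly_pos :: "('a::banach_lattice \<times> 'a \<Rightarrow> complex) \<Rightarrow> bool" where
  "strictly_pos f \<longleftrightarrow> (\<forall>x \<in> poscone. x \<noteq> 0 \<longrightarrow> Im (f x) = 0 \<and> Re (f x) > 0)"

text \<open>Modulus of a functional f in E', evaluated at x \<in> E_+ (Riesz-Kantorovich):
  |f|(x) = sup {|f(w)| : |w| \<le> x}.\<close>
definition dmod :: "('a::banach_lattice \<times> 'a \<Rightarrow> complex) \<Rightarrow> 'a \<Rightarrow> real" where
  "dmod f x = Sup {cmod (f w) | w. lmod w \<le> x}"

definition dual_pideal :: "('a::banach_lattice \<times> 'a \<Rightarrow> complex) \<Rightarrow> ('a \<times> 'a \<Rightarrow> complex) set" where
  "dual_pideal \<phi> = {f \<in> cdual. \<exists>c\<ge>0. \<forall>x. 0 \<le> x \<longrightarrow> dmod f x \<le> c * Re (\<phi> (x, 0))}"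

definition tensor :: "'a::banach_lattice \<Rightarrow> ('a \<times> 'a \<Rightarrow> complex) \<Rightarrow> 'a \<times> 'a \<Rightarrow> 'a \<times> 'a" where
  "tensor u \<phi> x = cscale (\<phi> x) (u, 0)"

definition op_succeq :: "('a::banach_lattice \<times> 'a \<Rightarrow> 'a \<times> 'a) \<Rightarrow> ('a \<times> 'a \<Rightarrow> 'a \<times> 'a) \<Rightarrow> bool" where
  "op_succeq T S \<longleftrightarrow> (\<exists>c::real>0. \<forall>x \<in> poscone. T x - c *\<^sub>R S x \<in> poscone)"

end

theory Submission
  imports Defs "HOL-Library.Lattice_Algebras"
begin

text \<open>For real \<open>\<mu>, \<nu> \<in> \<rho>(A)\<close> the resolvent identity reads
  \<open>R(\<nu>) = R(\<mu>) + (\<mu> - \<nu>) R(\<nu>) R(\<mu>)\<close>. The domain hypotheses make the last product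
  dominated on \<open>E\<^sub>+\<close> by a multiple of \<open>u \<otimes> \<phi>\<close>: \<open>R(\<nu>)\<close> maps \<open>E\<close> into
  \<open>D(A) \<subseteq> E\<^sub>u\<close>, so a Baire category argument gives \<open>|R(\<nu>) g| \<le> C \<parallel>g\<parallel> u\<close>;
  and \<open>R(\<mu>)'\<close> maps \<open>E'\<close> into \<open>D(A') \<subseteq> (E')\<^sub>\<phi>\<close>, so Baire category on \<open>E'\<close>
  together with Hahn--Banach gives \<open>\<parallel>R(\<mu>) f\<parallel> \<le> C' \<phi>(f)\<close> for \<open>f \<ge> 0\<close>. Hence a
  one-sided bound \<open>\<plusminus>R(\<mu>) f \<le> c \<phi>(f) u\<close> on \<open>E\<^sub>+\<close> passes to \<open>R(\<nu>)\<close> with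
  constant \<open>c + |\<mu> - \<nu>| C C'\<close>.\<close>

subclass (in banach_lattice) lattice_ab_group_add ..

definition labs :: "'a::banach_lattice \<Rightarrow> 'a" where
  "labs x = sup x (- x)"

lemma labs_le_iff: "labs x \<le> y \<longleftrightarrow> x \<le> y \<and> - x \<le> y" for x :: "'a::banach_lattice"
  unfolding labs_def by simp

lemma labs_ge_self: "x \<le> labs x"
  and labs_ge_minus: "- x \<le> labs x"
  for x :: "'a::banach_lattice"
  unfolding labs_def by simp_all

lemma labs_nonneg: "0 \<le> labs x" for x :: "'a::banach_lattice"
proof -
  have "x + - x \<le> labs x + labs x" by (rule add_mono[OF labs_ge_self labs_ge_minus])
  then show ?thesis by simp
qed

lemma labs_of_nonneg: "0 \<le> x \<Longrightarrow> labs x = x" for x :: "'a::banach_lattice"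
  unfolding labs_def by (rule sup_absorb1) (meson neg_le_0_iff_le order_trans)

lemma labs_minus: "labs (- x) = labs x" for x :: "'a::banach_lattice"
  unfolding labs_def by (simp add: sup_commute)

lemma labs_zero [simp]: "labs (0 :: 'a::banach_lattice) = 0"
  by (simp add: labs_of_nonneg)

lemma labs_triangle: "labs (x + y) \<le> labs x + labs y" for x y :: "'a::banach_lattice"
  unfolding labs_le_iff
proof
  show "x + y \<le> labs x + labs y" by (intro add_mono labs_ge_self)
  have "- x + - y \<le> labs x + labs y" by (intro add_mono labs_ge_minus)
  then show "- (x + y) \<le> labs x + labs y" by (simp add: add.commute)
qed

lemma scaleR_sup_distrib: "0 < c \<Longrightarrow> c *\<^sub>R sup x y = sup (c *\<^sub>R x) (c *\<^sub>R y)"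
  for x y :: "'a::banach_lattice"
proof (rule antisym)
  assume c: "0 < c"
  then show "sup (c *\<^sub>R x) (c *\<^sub>R y) \<le> c *\<^sub>R sup x y"
    by (auto intro!: scaleR_left_mono)
  have "z \<le> (1 / c) *\<^sub>R sup (c *\<^sub>R x) (c *\<^sub>R y)" if "z \<in> {x, y}" for z
  proof -
    have "(1 / c) *\<^sub>R (c *\<^sub>R z) \<le> (1 / c) *\<^sub>R sup (c *\<^sub>R x) (c *\<^sub>R y)"
      using c that by (intro scaleR_left_mono) auto
    then show ?thesis using c by simp
  qed
  then have "c *\<^sub>R sup x y \<le> c *\<^sub>R ((1 / c) *\<^sub>R sup (c *\<^sub>R x) (c *\<^sub>R y))"
    using c by (intro scaleR_left_mono) auto
  then show "c *\<^sub>R sup x y \<le> sup (c *\<^sub>R x) (c *\<^sub>R y)" using c by simp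
qed

lemma labs_scaleR: "labs (c *\<^sub>R x) = \<bar>c\<bar> *\<^sub>R labs x" for x :: "'a::banach_lattice"
proof (cases c "0 :: real" rule: linorder_cases)
  case less
  have "labs (c *\<^sub>R x) = labs ((- c) *\<^sub>R x)" by (metis labs_minus scaleR_minus_left)
  also have "\<dots> = (- c) *\<^sub>R labs x"
    using less scaleR_sup_distrib[of "- c" x "- x"] unfolding labs_def by simp
  finally show ?thesis using less by simp
qed (simp_all add: labs_def scaleR_sup_distrib)

lemma scaleR_le_labs: "c *\<^sub>R x \<le> \<bar>c\<bar> *\<^sub>R labs x" for x :: "'a::banach_lattice"
  by (metis labs_ge_self labs_scaleR)

lemma labs_sup_diff_le: "labs (sup x z - sup y z) \<le> labs (x - y)" for x y z :: "'a::banach_lattice"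
proof -
  have le: "sup x z - sup y z \<le> labs (x - y)" for x y :: 'a
  proof -
    have "x \<le> y + labs (x - y)"
      using add_left_mono[OF labs_ge_self[of "x - y"], of y] by simp
    moreover have "z \<le> z + labs (x - y)"
      using labs_nonneg[of "x - y"] by simp
    ultimately have "sup x z \<le> sup (y + labs (x - y)) (z + labs (x - y))"
      by (rule sup_mono)
    also have "\<dots> = sup y z + labs (x - y)" by (simp add: add_sup_distrib_right)
    finally show ?thesis by (metis add.commute diff_le_eq)
  qed
  have "labs (y - x) = labs (x - y)" by (metis labs_minus minus_diff_eq)
  moreover have "- (sup x z - sup y z) = sup y z - sup x z" by (rule minus_diff_eq)
  ultimately show ?thesis
    unfolding labs_le_iff using le[of x y] le[of y x] by metis
qed

lemma norm_mono_labs: "labs x \<le> labs y \<Longrightarrow> norm x \<le> norm y" for x y :: "'a::banach_lattice"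
  unfolding labs_def by (rule lattice_norm)

lemma norm_le_if_labs_le: "labs x \<le> y \<Longrightarrow> norm x \<le> norm y" for x y :: "'a::banach_lattice"
  by (metis labs_nonneg labs_of_nonneg norm_mono_labs order_trans)

lemma closed_nonneg: "closed {x :: 'a::banach_lattice. 0 \<le> x}"
proof -
  let ?h = "\<lambda>x :: 'a. sup (- x) 0"
  have "1-lipschitz_on UNIV ?h"
  proof (rule lipschitz_onI)
    fix x y :: 'a
    have "labs (?h x - ?h y) \<le> labs (- x - - y)" by (rule labs_sup_diff_le)
    then have "norm (?h x - ?h y) \<le> norm (- x - - y)"
      by (rule norm_mono_labs)
    then show "dist (?h x) (?h y) \<le> 1 * dist x y"
      by (simp add: dist_norm norm_minus_commute)
  qed simp
  then have "closed {x. ?h x = 0}"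
    by (intro closed_Collect_eq lipschitz_on_continuous_on continuous_on_const)
  also have "{x. ?h x = 0} = {x. 0 \<le> x}"
    by (auto simp: sup_absorb2 neg_le_0_iff_le) (metis sup_ge1 neg_le_0_iff_le)
  finally show ?thesis .
qed

lemma closed_Collect_le_lattice:
  assumes "continuous_on UNIV f" "continuous_on UNIV g"
  shows "closed {x. f x \<le> (g x :: 'a::banach_lattice)}"
proof -
  have "closed ((\<lambda>x. g x - f x) -` {x. 0 \<le> x})"
    using assms by (intro closed_vimage closed_nonneg continuous_intros)
  then show ?thesis by (simp add: le_diff_eq)
qed

lemma ex_pos_bound_iff:
  fixes x v :: "'i \<Rightarrow> 'a::ordered_real_vector"
  assumes "\<And>i. i \<in> I \<Longrightarrow> 0 \<le> v i"
  shows "(\<exists>C>0. \<forall>i\<in>I. x i \<le> C *\<^sub>R v i) \<longleftrightarrow> (\<exists>C. \<forall>i\<in>I. x i \<le> C *\<^sub>R v i)"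
proof
  assume "\<exists>C. \<forall>i\<in>I. x i \<le> C *\<^sub>R v i"
  then obtain C where C: "\<And>i. i \<in> I \<Longrightarrow> x i \<le> C *\<^sub>R v i" by blast
  have "x i \<le> max C 1 *\<^sub>R v i" if "i \<in> I" for i
    using C[OF that] scaleR_right_mono[OF max.cobounded1 assms[OF that]] by (rule order_trans)
  then show "\<exists>C>0. \<forall>i\<in>I. x i \<le> C *\<^sub>R v i" by (intro exI[of _ "max C 1"]) auto
qed blast

lemma ex_pos_scale_le_iff:
  fixes x v :: "'i \<Rightarrow> 'a::ordered_real_vector"
  assumes "\<And>i. i \<in> I \<Longrightarrow> 0 \<le> v i"
  shows "(\<exists>c>0. \<forall>i\<in>I. c *\<^sub>R x i \<le> v i) \<longleftrightarrow> (\<exists>C. \<forall>i\<in>I. x i \<le> C *\<^sub>R v i)"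
proof -
  have "c *\<^sub>R x i \<le> v i \<longleftrightarrow> x i \<le> inverse c *\<^sub>R v i" if "0 < c" for c i
    by (rule pos_le_divideR_eq[OF that, symmetric])
  then have "(\<exists>c>0. \<forall>i\<in>I. c *\<^sub>R x i \<le> v i) \<longleftrightarrow> (\<exists>C>0. \<forall>i\<in>I. x i \<le> C *\<^sub>R v i)"
    by (metis inverse_inverse_eq positive_imp_inverse_positive)
  also have "\<dots> \<longleftrightarrow> (\<exists>C. \<forall>i\<in>I. x i \<le> C *\<^sub>R v i)"
    using assms by (rule ex_pos_bound_iff)
  finally show ?thesis .
qed

lemma upper_bound_perturb:
  fixes x z u :: "'a::banach_lattice"
  assumes "x \<le> a *\<^sub>R u" and "labs z \<le> b *\<^sub>R u"
  shows "x + k *\<^sub>R z \<le> (a + \<bar>k\<bar> * b) *\<^sub>R u"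
proof -
  have "k *\<^sub>R z \<le> \<bar>k\<bar> *\<^sub>R labs z" by (rule scaleR_le_labs)
  also have "\<dots> \<le> (\<bar>k\<bar> * b) *\<^sub>R u"
    using scaleR_left_mono[OF assms(2), of "\<bar>k\<bar>"] by simp
  finally show ?thesis using assms(1) by (simp add: add_mono scaleR_add_left)
qed

section \<open>The complex modulus\<close>

text \<open>Since \<open>lmod\<close> is a definite description, every fact about it needs the supremum
  over \<open>t\<close> to exist; it is the limit of the maxima over the grids \<open>2\<pi>k/(n+1)\<close>.\<close>

lemma Cauchy_if_diff_le:
  fixes m :: "nat \<Rightarrow> 'a::banach_lattice"
  assumes step: "\<And>p q. m p - m q \<le> (e p + e q) *\<^sub>R W"
    and e: "e \<longlonglongrightarrow> 0" "\<And>n. 0 \<le> e n"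
  shows "Cauchy m"
proof (rule CauchyI)
  fix \<epsilon> :: real assume "0 < \<epsilon>"
  then have "\<forall>\<^sub>F n in sequentially. e n * norm W < \<epsilon> / 2"
    by (intro order_tendstoD(2)[OF tendsto_mult_left_zero[OF e(1)]]) simp
  then obtain N where N: "\<And>n. N \<le> n \<Longrightarrow> e n * norm W < \<epsilon> / 2"
    unfolding eventually_sequentially by blast
  have "norm (m p - m q) < \<epsilon>" if "N \<le> p" "N \<le> q" for p q
  proof -
    have "labs (m p - m q) \<le> (e p + e q) *\<^sub>R W"
      using step[of p q] step[of q p] unfolding labs_le_iff by (simp add: add.commute)
    then have "norm (m p - m q) \<le> (e p + e q) * norm W"
      using norm_le_if_labs_le e(2) by (metis abs_of_nonneg add_nonneg_nonneg norm_scaleR)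
    also have "\<dots> < \<epsilon>"
      unfolding distrib_right using N[OF that(1)] N[OF that(2)] by linarith
    finally show ?thesis .
  qed
  then show "\<exists>N. \<forall>p\<ge>N. \<forall>q\<ge>N. norm (m p - m q) < \<epsilon>" by blast
qed

lemma ex_lub_if_approximable:
  fixes g :: "'b \<Rightarrow> 'a::banach_lattice" and m :: "nat \<Rightarrow> 'a"
  assumes above: "\<And>n t. g t \<le> m n + e n *\<^sub>R W"
    and below: "\<And>n b. (\<And>t. g t \<le> b) \<Longrightarrow> m n \<le> b"
    and e: "e \<longlonglongrightarrow> 0" "\<And>n. 0 \<le> e n" and W: "0 \<le> W"
  shows "\<exists>M. (\<forall>t. g t \<le> M) \<and> (\<forall>b. (\<forall>t. g t \<le> b) \<longrightarrow> M \<le> b)"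
proof -
  have "m p - m q \<le> (e p + e q) *\<^sub>R W" for p q
  proof -
    have "m p \<le> m q + e q *\<^sub>R W" using above by (intro below)
    also have "\<dots> \<le> m q + (e p + e q) *\<^sub>R W"
      using e(2) W by (intro add_left_mono scaleR_right_mono) auto
    finally show ?thesis by (simp add: diff_le_eq add.commute)
  qed
  then have "Cauchy m" using e by (rule Cauchy_if_diff_le)
  then obtain M where M: "m \<longlonglongrightarrow> M"
    using Cauchy_convergent_iff convergent_def by blast
  have lim: "(\<lambda>n. m n + e n *\<^sub>R W) \<longlonglongrightarrow> M"
    using tendsto_add[OF M tendsto_scaleR[OF e(1) tendsto_const]] by simp
  have closed_above: "closed {x. y \<le> x}" and closed_below: "closed {x. x \<le> y}" for y :: 'a
    using closed_Collect_le_lattice[of "\<lambda>_. y" "\<lambda>x. x"] closed_Collect_le_lattice[of "\<lambda>x. x" "\<lambda>_. y"]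
    by (simp_all add: continuous_on_id)
  have "g t \<le> M" for t
    using closed_sequentially[OF closed_above _ lim] above by simp
  moreover have "M \<le> b" if "\<forall>t. g t \<le> b" for b
    using closed_sequentially[OF closed_below _ M] below that by simp
  ultimately show ?thesis by blast
qed

lemma abs_cos_diff_le: "\<bar>cos t - cos s\<bar> \<le> \<bar>t - s\<bar>" for t s :: real
proof -
  have "\<bar>cos t - cos s\<bar> = 2 * \<bar>sin ((t + s) / 2)\<bar> * \<bar>sin ((s - t) / 2)\<bar>"
    by (simp add: cos_diff_cos abs_mult)
  also have "\<dots> \<le> 2 * 1 * \<bar>(s - t) / 2\<bar>"
    by (intro mult_mono abs_sin_le_one abs_sin_x_le_abs_x) auto
  finally show ?thesis by simp
qed

lemma abs_sin_diff_le: "\<bar>sin t - sin s\<bar> \<le> \<bar>t - s\<bar>" for t s :: real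
proof -
  have "\<bar>sin t - sin s\<bar> = 2 * \<bar>sin ((t - s) / 2)\<bar> * \<bar>cos ((t + s) / 2)\<bar>"
    by (simp add: sin_diff_sin abs_mult)
  also have "\<dots> \<le> 2 * \<bar>(t - s) / 2\<bar> * 1"
    by (intro mult_mono abs_cos_le_one abs_sin_x_le_abs_x) auto
  finally show ?thesis by simp
qed

lemma cos_sin_combination_diff_le:
  fixes a b :: "'a::banach_lattice"
  shows "(cos t *\<^sub>R a + sin t *\<^sub>R b) - (cos s *\<^sub>R a + sin s *\<^sub>R b)
           \<le> \<bar>t - s\<bar> *\<^sub>R (labs a + labs b)"
proof -
  have "(cos t *\<^sub>R a + sin t *\<^sub>R b) - (cos s *\<^sub>R a + sin s *\<^sub>R b)
      = (cos t - cos s) *\<^sub>R a + (sin t - sin s) *\<^sub>R b"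
    by (simp add: algebra_simps)
  also have "\<dots> \<le> \<bar>cos t - cos s\<bar> *\<^sub>R labs a + \<bar>sin t - sin s\<bar> *\<^sub>R labs b"
    by (intro add_mono scaleR_le_labs)
  also have "\<dots> \<le> \<bar>t - s\<bar> *\<^sub>R labs a + \<bar>t - s\<bar> *\<^sub>R labs b"
    by (intro add_mono scaleR_right_mono labs_nonneg abs_cos_diff_le abs_sin_diff_le)
  finally show ?thesis by (simp add: scaleR_right_distrib)
qed

lemma cos_sin_combination_le_grid:
  fixes a b :: "'a::banach_lattice" and n :: nat
  defines "s k \<equiv> 2 * pi * real k / real (Suc n)"
  shows "\<exists>k\<le>n. cos t *\<^sub>R a + sin t *\<^sub>R b
           \<le> (cos (s k) *\<^sub>R a + sin (s k) *\<^sub>R b) + (2 * pi / real (Suc n)) *\<^sub>R (labs a + labs b)"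
proof -
  define N where "N = real (Suc n)"
  define q where "q = \<lfloor>t * N / (2 * pi)\<rfloor>"
  define j where "j = nat (q mod int (Suc n))"
  have N: "N > 0" unfolding N_def by simp
  define s0 where "s0 = 2 * pi * real_of_int q / N"
  have "real_of_int q \<le> t * N / (2 * pi)" "t * N / (2 * pi) < real_of_int q + 1"
    unfolding q_def by linarith+
  then have "s0 \<le> t" "t < s0 + 2 * pi / N"
    unfolding s0_def using N pi_gt_zero by (simp_all add: field_simps)
  then have t_near: "\<bar>t - s0\<bar> \<le> 2 * pi / N" by simp
  have j: "j \<le> n" "int j = q mod int (Suc n)"
    unfolding j_def using pos_mod_bound[of "int (Suc n)" q] by (linarith, simp)
  have "real_of_int q = real_of_int (q div int (Suc n)) * N + real j"
    unfolding N_def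
    by (metis j(2) div_mult_mod_eq of_int_add of_int_mult of_int_of_nat_eq)
  then have s0_eq: "s0 = s j + of_int (q div int (Suc n)) * (2 * of_real pi)"
    unfolding s0_def s_def N_def[symmetric] using N by (simp add: field_simps)
  have cs: "cos s0 = cos (s j)" "sin s0 = sin (s j)"
    unfolding s0_eq by (rule cos.plus_of_int, rule sin.plus_of_int)
  have "cos t *\<^sub>R a + sin t *\<^sub>R b
      \<le> (cos (s j) *\<^sub>R a + sin (s j) *\<^sub>R b) + \<bar>t - s0\<bar> *\<^sub>R (labs a + labs b)"
    using cos_sin_combination_diff_le[of t a b s0] unfolding cs
    by (simp add: diff_le_eq add.commute)
  also have "\<dots> \<le> (cos (s j) *\<^sub>R a + sin (s j) *\<^sub>R b) + (2 * pi / N) *\<^sub>R (labs a + labs b)"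
    using t_near by (intro add_left_mono scaleR_right_mono add_nonneg_nonneg labs_nonneg)
  finally show ?thesis using j(1) unfolding N_def by blast
qed

lemma ex_lub_cos_sin_combination:
  fixes a b :: "'a::banach_lattice"
  shows "\<exists>m. (\<forall>t. cos t *\<^sub>R a + sin t *\<^sub>R b \<le> m) \<and>
             (\<forall>m'. (\<forall>t. cos t *\<^sub>R a + sin t *\<^sub>R b \<le> m') \<longrightarrow> m \<le> m')"
proof (rule ex_lub_if_approximable)
  define g where "g t = cos t *\<^sub>R a + sin t *\<^sub>R b" for t
  define grid where "grid n = g ` (\<lambda>k. 2 * pi * real k / real (Suc n)) ` {..n}" for n
  show "g t \<le> Sup_fin (grid n) + (2 * pi / real (Suc n)) *\<^sub>R (labs a + labs b)" for n t
  proof -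
    obtain k where "k \<le> n"
      "g t \<le> g (2 * pi * real k / real (Suc n)) + (2 * pi / real (Suc n)) *\<^sub>R (labs a + labs b)"
      using cos_sin_combination_le_grid[where a = a and b = b and n = n and t = t] unfolding g_def by blast
    moreover have "g (2 * pi * real k / real (Suc n)) \<le> Sup_fin (grid n)" if "k \<le> n"
      using that by (intro Sup_fin.coboundedI) (auto simp: grid_def)
    ultimately show ?thesis by (meson add_right_mono order_trans)
  qed
  show "Sup_fin (grid n) \<le> m'" if "\<And>t. g t \<le> m'" for n m'
    using that by (intro Sup_fin.boundedI) (auto simp: grid_def)
  show "(\<lambda>n. 2 * pi / real (Suc n)) \<longlonglongrightarrow> 0"
    using tendsto_mult_right_zero[OF LIMSEQ_inverse_real_of_nat, of "2 * pi"]
    by (simp add: divide_inverse)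
qed (simp_all add: add_nonneg_nonneg labs_nonneg)

lemma lmod_is_lub:
  fixes w :: "'a::banach_lattice \<times> 'a"
  shows "cos t *\<^sub>R fst w + sin t *\<^sub>R snd w \<le> lmod w"
    and "(\<And>t. cos t *\<^sub>R fst w + sin t *\<^sub>R snd w \<le> m) \<Longrightarrow> lmod w \<le> m"
proof -
  let ?P = "\<lambda>m. (\<forall>t. cos t *\<^sub>R fst w + sin t *\<^sub>R snd w \<le> m) \<and>
                (\<forall>m'. (\<forall>t. cos t *\<^sub>R fst w + sin t *\<^sub>R snd w \<le> m') \<longrightarrow> m \<le> m')"
  obtain m0 where "?P m0" using ex_lub_cos_sin_combination by blast
  then have "\<exists>!m. ?P m" by (intro ex1I) (auto intro: antisym)
  then have "?P (lmod w)" unfolding lmod_def by (rule theI')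
  then show "cos t *\<^sub>R fst w + sin t *\<^sub>R snd w \<le> lmod w"
    and "(\<And>t. cos t *\<^sub>R fst w + sin t *\<^sub>R snd w \<le> m) \<Longrightarrow> lmod w \<le> m"
    by blast+
qed

lemma labs_fst_le_lmod: "labs (fst w) \<le> lmod w"
  and labs_snd_le_lmod: "labs (snd w) \<le> lmod w"
  for w :: "'a::banach_lattice \<times> 'a"
  unfolding labs_le_iff
  using lmod_is_lub(1)[of 0 w] lmod_is_lub(1)[of pi w]
    lmod_is_lub(1)[of "pi / 2" w] lmod_is_lub(1)[of "- (pi / 2)" w]
  by simp_all

lemma lmod_real: "lmod (x, 0) = labs x" for x :: "'a::banach_lattice"
proof (rule antisym)
  have "cos t *\<^sub>R x \<le> labs x" for t
  proof -
    have "cos t *\<^sub>R x \<le> \<bar>cos t\<bar> *\<^sub>R labs x" by (rule scaleR_le_labs)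
    also have "\<dots> \<le> 1 *\<^sub>R labs x" by (intro scaleR_right_mono abs_cos_le_one labs_nonneg)
    finally show ?thesis by simp
  qed
  then show "lmod (x, 0) \<le> labs x" by (intro lmod_is_lub(2)) simp
  show "labs x \<le> lmod (x, 0)" using labs_fst_le_lmod[of "(x, 0)"] by simp
qed

lemma norm_le_if_lmod_le:
  fixes w :: "'a::banach_lattice \<times> 'a"
  assumes "lmod w \<le> x"
  shows "norm w \<le> 2 * norm x"
proof -
  have "norm (fst w) \<le> norm x" "norm (snd w) \<le> norm x"
    using assms labs_fst_le_lmod labs_snd_le_lmod by (metis norm_le_if_labs_le order_trans)+
  then show ?thesis using norm_Pair_le[of "fst w" "snd w"] by simp
qed

section \<open>Norming functionals\<close>

text \<open>Graphs of linear functionals on subspaces, dominated by the norm and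
  normalised at \<open>x\<^sub>0\<close>; a maximal one is defined everywhere (Hahn--Banach).\<close>

definition dominated_graph :: "'a::real_normed_vector \<Rightarrow> ('a \<times> real) set \<Rightarrow> bool" where
  "dominated_graph x\<^sub>0 G \<longleftrightarrow> (x\<^sub>0, norm x\<^sub>0) \<in> G \<and>
     (\<forall>(x, a) \<in> G. \<forall>(y, b) \<in> G. \<forall>c. (x + c *\<^sub>R y, a + c * b) \<in> G) \<and>
     (\<forall>(x, a) \<in> G. a \<le> norm x)"

lemma dominated_graphI:
  assumes "(x\<^sub>0, norm x\<^sub>0) \<in> G"
    and "\<And>x a y b c. (x, a) \<in> G \<Longrightarrow> (y, b) \<in> G \<Longrightarrow> (x + c *\<^sub>R y, a + c * b) \<in> G"
    and "\<And>x a. (x, a) \<in> G \<Longrightarrow> a \<le> norm x"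
  shows "dominated_graph x\<^sub>0 G"
  using assms unfolding dominated_graph_def by auto

context
  fixes x\<^sub>0 :: "'a::real_normed_vector" and G :: "('a \<times> real) set"
  assumes G: "dominated_graph x\<^sub>0 G"
begin

lemma dominated_graph_x0: "(x\<^sub>0, norm x\<^sub>0) \<in> G"
  and dominated_graph_lincomb: "(x, a) \<in> G \<Longrightarrow> (y, b) \<in> G \<Longrightarrow> (x + c *\<^sub>R y, a + c * b) \<in> G"
  and dominated_graph_le_norm: "(x, a) \<in> G \<Longrightarrow> a \<le> norm x"
  using G unfolding dominated_graph_def by fast+

lemma dominated_graph_zero: "(0, 0) \<in> G"
  using dominated_graph_lincomb[OF dominated_graph_x0 dominated_graph_x0, of "-1"] by simp

lemma dominated_graph_scaleR: "(x, a) \<in> G \<Longrightarrow> (c *\<^sub>R x, c * a) \<in> G"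
  using dominated_graph_lincomb[OF dominated_graph_zero] by fastforce

lemma dominated_graph_add: "(x, a) \<in> G \<Longrightarrow> (y, b) \<in> G \<Longrightarrow> (x + y, a + b) \<in> G"
  using dominated_graph_lincomb[of x a y b 1] by simp

lemma dominated_graph_unique: "(x, a) \<in> G \<Longrightarrow> (x, b) \<in> G \<Longrightarrow> a = b"
proof -
  assume "(x, a) \<in> G" "(x, b) \<in> G"
  then have "(0, a - b) \<in> G" using dominated_graph_lincomb[of x a x b "-1"] by simp
  then have "((a - b) *\<^sub>R 0, (a - b) * (a - b)) \<in> G" by (rule dominated_graph_scaleR)
  then have "(a - b) * (a - b) \<le> 0" using dominated_graph_le_norm by fastforce
  then show "a = b" using mult_le_0_iff[of "a - b" "a - b"] by linarith
qed

lemma ex_extension_value: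
  "\<exists>c. \<forall>(x, a) \<in> G. a - norm (x - y) \<le> c \<and> c \<le> norm (x + y) - a"
proof -
  have sep: "a - norm (x - y) \<le> norm (x' + y) - a'" if "(x, a) \<in> G" "(x', a') \<in> G" for x a x' a'
  proof -
    have "a + a' \<le> norm (x + x')"
      using dominated_graph_le_norm[OF dominated_graph_add[OF that]] .
    also have "\<dots> \<le> norm (x - y) + norm (x' + y)"
      using norm_triangle_ineq[of "x - y" "x' + y"] by simp
    finally show ?thesis by simp
  qed
  define c where "c = Sup {a - norm (x - y) | x a. (x, a) \<in> G}"
  have "a - norm (x - y) \<le> c" if "(x, a) \<in> G" for x a
    unfolding c_def using that sep[OF _ dominated_graph_zero]
    by (intro cSup_upper bdd_aboveI[of _ "norm y"]) auto
  moreover have "c \<le> norm (x + y) - a" if "(x, a) \<in> G" for x a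
    unfolding c_def using dominated_graph_zero sep[OF _ that]
    by (intro cSup_least) auto
  ultimately show ?thesis by blast
qed

lemma extension_le_norm:
  assumes c: "\<forall>(x, a) \<in> G. a - norm (x - y) \<le> c \<and> c \<le> norm (x + y) - a"
    and xa: "(x, a) \<in> G"
  shows "a + t * c \<le> norm (x + t *\<^sub>R y)"
proof (cases t "0 :: real" rule: linorder_cases)
  case greater
  have "((1 / t) *\<^sub>R x, (1 / t) * a) \<in> G" by (rule dominated_graph_scaleR[OF xa])
  then have "c \<le> norm ((1 / t) *\<^sub>R x + y) - (1 / t) * a" using c by fast
  then have "t * c \<le> t * norm ((1 / t) *\<^sub>R x + y) - a"
    using greater by (simp add: field_simps)
  also have "x + t *\<^sub>R y = t *\<^sub>R ((1 / t) *\<^sub>R x + y)"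
    using greater by (simp add: algebra_simps)
  then have "t * norm ((1 / t) *\<^sub>R x + y) = norm (x + t *\<^sub>R y)"
    using greater by simp
  finally show ?thesis by simp
next
  case less
  have "((1 / - t) *\<^sub>R x, (1 / - t) * a) \<in> G" by (rule dominated_graph_scaleR[OF xa])
  then have "(1 / - t) * a - norm ((1 / - t) *\<^sub>R x - y) \<le> c" using c by fast
  then have "a - (- t) * norm ((1 / - t) *\<^sub>R x - y) \<le> (- t) * c"
    using less by (simp add: field_simps)
  also have "x + t *\<^sub>R y = (- t) *\<^sub>R ((1 / - t) *\<^sub>R x - y)"
    using less by (simp add: algebra_simps)
  then have "(- t) * norm ((1 / - t) *\<^sub>R x - y) = norm (x + t *\<^sub>R y)"
    using less by simp
  finally show ?thesis by simp
qed (use dominated_graph_le_norm xa in simp)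

lemma dominated_graph_extend:
  assumes c: "\<forall>(x, a) \<in> G. a - norm (x - y) \<le> c \<and> c \<le> norm (x + y) - a"
  shows "dominated_graph x\<^sub>0 {(x + t *\<^sub>R y, a + t * c) | x a t. (x, a) \<in> G}"
proof (rule dominated_graphI)
  show "(x\<^sub>0, norm x\<^sub>0) \<in> {(x + t *\<^sub>R y, a + t * c) | x a t. (x, a) \<in> G}"
    using dominated_graph_x0 by force
  fix z b w d k
  assume "(z, b) \<in> {(x + t *\<^sub>R y, a + t * c) | x a t. (x, a) \<in> G}"
    and "(w, d) \<in> {(x + t *\<^sub>R y, a + t * c) | x a t. (x, a) \<in> G}"
  then obtain x a t x' a' t' where "(x, a) \<in> G" "(x', a') \<in> G"
    and "z = x + t *\<^sub>R y" "b = a + t * c" "w = x' + t' *\<^sub>R y" "d = a' + t' * c"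
    by blast
  then show "(z + k *\<^sub>R w, b + k * d) \<in> {(x + t *\<^sub>R y, a + t * c) | x a t. (x, a) \<in> G}"
    using dominated_graph_lincomb[of x a x' a' k]
    by (intro CollectI exI[of _ "x + k *\<^sub>R x'"] exI[of _ "a + k * a'"] exI[of _ "t + k * t'"])
       (simp add: algebra_simps)
qed (use extension_le_norm[OF c] in blast)

end

lemma dominated_graph_span: "dominated_graph x\<^sub>0 (range (\<lambda>c. (c *\<^sub>R x\<^sub>0, c * norm x\<^sub>0)))"
proof (rule dominated_graphI)
  show "(x\<^sub>0, norm x\<^sub>0) \<in> range (\<lambda>c. (c *\<^sub>R x\<^sub>0, c * norm x\<^sub>0))"
    by (rule range_eqI[of _ _ 1]) simp
  fix x a y b k
  assume "(x, a) \<in> range (\<lambda>c. (c *\<^sub>R x\<^sub>0, c * norm x\<^sub>0))"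
    and "(y, b) \<in> range (\<lambda>c. (c *\<^sub>R x\<^sub>0, c * norm x\<^sub>0))"
  then obtain c d where "x = c *\<^sub>R x\<^sub>0" "a = c * norm x\<^sub>0" "y = d *\<^sub>R x\<^sub>0" "b = d * norm x\<^sub>0"
    by auto
  then show "(x + k *\<^sub>R y, a + k * b) \<in> range (\<lambda>c. (c *\<^sub>R x\<^sub>0, c * norm x\<^sub>0))"
    by (intro range_eqI[of _ _ "c + k * d"]) (simp add: algebra_simps)
next
  fix x a assume "(x, a) \<in> range (\<lambda>c. (c *\<^sub>R x\<^sub>0, c * norm x\<^sub>0))"
  then show "a \<le> norm x" by (auto simp: mult_right_mono)
qed

lemma dominated_graph_Union_chain:
  assumes "\<C> \<noteq> {}" and chain: "subset.chain {G. dominated_graph x\<^sub>0 G} \<C>"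
  shows "dominated_graph x\<^sub>0 (\<Union>\<C>)"
proof (rule dominated_graphI)
  have good: "dominated_graph x\<^sub>0 G" if "G \<in> \<C>" for G
    using chain that unfolding subset_chain_def by blast
  have common: "\<exists>G\<in>\<C>. p \<in> G \<and> q \<in> G" if "p \<in> \<Union>\<C>" "q \<in> \<Union>\<C>" for p q
    using chain that unfolding subset_chain_def by blast
  show "(x\<^sub>0, norm x\<^sub>0) \<in> \<Union>\<C>"
    using \<open>\<C> \<noteq> {}\<close> good dominated_graph_x0 by blast
  show "(x + k *\<^sub>R y, a + k * b) \<in> \<Union>\<C>" if "(x, a) \<in> \<Union>\<C>" "(y, b) \<in> \<Union>\<C>" for x a y b k
    using common[OF that] good dominated_graph_lincomb by blast
  show "a \<le> norm x" if "(x, a) \<in> \<Union>\<C>" for x a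
    using that good dominated_graph_le_norm by blast
qed

lemma ex_maximal_dominated_graph:
  fixes x\<^sub>0 :: "'a::real_normed_vector"
  shows "\<exists>M. dominated_graph x\<^sub>0 M \<and> (\<forall>G. dominated_graph x\<^sub>0 G \<longrightarrow> M \<subseteq> G \<longrightarrow> G = M)"
proof -
  have "\<exists>M\<in>{G. dominated_graph x\<^sub>0 G}. \<forall>G\<in>{G. dominated_graph x\<^sub>0 G}. M \<subseteq> G \<longrightarrow> G = M"
  proof (rule subset_Zorn_nonempty)
    show "{G. dominated_graph x\<^sub>0 G} \<noteq> {}" using dominated_graph_span by blast
  qed (simp add: dominated_graph_Union_chain)
  then show ?thesis by blast
qed

lemma ex_norming_functional:
  fixes x\<^sub>0 :: "'a::real_normed_vector"
  shows "\<exists>\<psi>::'a \<Rightarrow>\<^sub>L real. norm \<psi> \<le> 1 \<and> blinfun_apply \<psi> x\<^sub>0 = norm x\<^sub>0"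
proof -
  obtain M where M: "dominated_graph x\<^sub>0 M"
    and max: "\<And>G. dominated_graph x\<^sub>0 G \<Longrightarrow> M \<subseteq> G \<Longrightarrow> G = M"
    using ex_maximal_dominated_graph by blast
  have total: "\<exists>a. (y, a) \<in> M" for y
  proof -
    obtain c where c: "\<forall>(x, a) \<in> M. a - norm (x - y) \<le> c \<and> c \<le> norm (x + y) - a"
      using ex_extension_value[OF M] by blast
    let ?M' = "{(x + t *\<^sub>R y, a + t * c) | x a t. (x, a) \<in> M}"
    have "M \<subseteq> ?M'" by force
    then have "?M' = M" using max dominated_graph_extend[OF M c] by blast
    moreover have "(y, c) \<in> ?M'"
      using dominated_graph_zero[OF M] by force
    ultimately show ?thesis by blast
  qed
  define f where "f y = (THE a. (y, a) \<in> M)" for y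
  have f: "(y, f y) \<in> M" for y
    using total[of y] dominated_graph_unique[OF M] unfolding f_def by (metis theI)
  have f_eq: "(y, a) \<in> M \<Longrightarrow> f y = a" for y a
    using dominated_graph_unique[OF M f] by blast
  have norm_f: "norm (f x) \<le> norm x" for x
    using dominated_graph_le_norm[OF M f[of x]]
      dominated_graph_le_norm[OF M dominated_graph_scaleR[OF M f[of x], of "-1"]]
    by simp
  have "bounded_linear f"
  proof (rule bounded_linear_intro)
    show "f (x + y) = f x + f y" for x y
      by (intro f_eq dominated_graph_add[OF M] f)
    show "f (r *\<^sub>R x) = r *\<^sub>R f x" for r x
      using f_eq[OF dominated_graph_scaleR[OF M f]] by simp
    show "norm (f x) \<le> norm x * 1" for x
      using norm_f by simp
  qed
  then show ?thesis
    using f_eq[OF dominated_graph_x0[OF M]] norm_f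
    by (intro exI[of _ "Blinfun f"])
       (auto simp: bounded_linear_Blinfun_apply intro!: norm_blinfun_bound)
qed

section \<open>A Baire category bound\<close>

lemma Baire_closed_cover:
  fixes F :: "nat \<Rightarrow> 'b::complete_space set"
  assumes "\<And>n. closed (F n)" and "\<And>x. \<exists>n. x \<in> F n"
  shows "\<exists>n x r. 0 < r \<and> ball x r \<subseteq> F n"
proof (rule ccontr)
  assume no_ball: "\<not> ?thesis"
  have "euclidean interior_of \<Union>(range F) = {}"
  proof (rule Baire_category_alt)
    show "completely_metrizable_space (euclidean :: 'b topology) \<or>
          locally_compact_space (euclidean :: 'b topology) \<and> regular_space (euclidean :: 'b topology)"
      using completely_metrizable_space_euclidean by blast
    have "interior (F n) = {}" for n
      using no_ball by (metis equals0I mem_interior)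
    then show "closedin euclidean T \<and> euclidean interior_of T = {}" if "T \<in> range F" for T
      using that assms(1) by (auto simp: closed_closedin[symmetric])
  qed simp
  moreover have "\<Union>(range F) = UNIV" using assms(2) by blast
  ultimately show False by simp
qed

text \<open>Read \<open>P a x\<close> as ``\<open>x\<close> has size at most \<open>a\<close>''. This one Baire argument
  stands in for both the closed graph theorem and the uniform boundedness principle.\<close>

lemma uniform_bound_from_closed_cover:
  fixes P :: "real \<Rightarrow> 'b::banach \<Rightarrow> bool"
  assumes closed: "\<And>n::nat. closed {x. P (real n) x}"
    and cover: "\<And>x. \<exists>n::nat. P (real n) x"
    and diff: "\<And>a b x y. P a x \<Longrightarrow> P b y \<Longrightarrow> P (a + b) (x - y)"
    and scale: "\<And>a t x. 0 < t \<Longrightarrow> P a x \<Longrightarrow> P (t * a) (t *\<^sub>R x)"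
    and zero: "P 0 0"
  shows "\<exists>C\<ge>0. \<forall>x. P (C * norm x) x"
proof -
  obtain n x\<^sub>0 r where r: "0 < r" "ball x\<^sub>0 r \<subseteq> {x. P (real n) x}"
    using Baire_closed_cover[of "\<lambda>n. {x. P (real n) x}"] closed cover by blast
  have small: "P (2 * real n) h" if "norm h < r" for h
  proof -
    have "x\<^sub>0 + h \<in> ball x\<^sub>0 r" "x\<^sub>0 \<in> ball x\<^sub>0 r"
      using r(1) that by (simp_all add: dist_norm)
    then have "P (real n) (x\<^sub>0 + h)" "P (real n) x\<^sub>0"
      using r(2) by blast+
    from diff[OF this] show ?thesis by simp
  qed
  have "P (4 * real n / r * norm x) x" for x
  proof (cases "x = 0")
    case False
    define k where "k = r / (2 * norm x)"
    have k: "0 < k" "norm (k *\<^sub>R x) < r"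
      using False r(1) by (simp_all add: k_def)
    have "P (1 / k * (2 * real n)) ((1 / k) *\<^sub>R (k *\<^sub>R x))"
      using k(1) by (intro scale small k(2)) simp
    moreover have "1 / k * (2 * real n) = 4 * real n / r * norm x"
      using False r(1) by (simp add: k_def field_simps)
    ultimately show ?thesis using k(1) by simp
  qed (simp add: zero)
  then show ?thesis using r(1) by (intro exI[of _ "4 * real n / r"]) simp
qed

lemma cscale_of_real [simp]: "cscale (complex_of_real r) x = r *\<^sub>R x"
  by (simp add: cscale_def prod_eq_iff)

lemma cscale_diff: "cscale c (x - y) = cscale c x - cscale c y"
  and cscale_scaleR: "cscale c (r *\<^sub>R x) = r *\<^sub>R cscale c x"
  by (simp_all add: cscale_def algebra_simps)

lemma cscale_zero [simp]: "cscale c 0 = 0"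
  by (simp add: cscale_def zero_prod_def)

lemma cdual_add: "\<Psi> \<in> cdual \<Longrightarrow> \<Psi> (x + y) = \<Psi> x + \<Psi> y"
  and cdual_cscale: "\<Psi> \<in> cdual \<Longrightarrow> \<Psi> (cscale c x) = c * \<Psi> x"
  and cdual_continuous: "\<Psi> \<in> cdual \<Longrightarrow> continuous_on UNIV \<Psi>"
  unfolding cdual_def by blast+

lemma cdual_scaleR: "\<Psi> \<in> cdual \<Longrightarrow> \<Psi> (r *\<^sub>R x) = complex_of_real r * \<Psi> x"
  using cdual_cscale[of \<Psi> "complex_of_real r"] by simp

lemma cdual_diff: "\<Psi> \<in> cdual \<Longrightarrow> \<Psi> (x - y) = \<Psi> x - \<Psi> y"
  using cdual_add[of \<Psi> "x - y" y] by (simp add: algebra_simps)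

lemma cdualI:
  assumes "continuous_on UNIV \<Psi>" "\<And>x y. \<Psi> (x + y) = \<Psi> x + \<Psi> y"
    and "\<And>c x. \<Psi> (cscale c x) = c * \<Psi> x"
  shows "\<Psi> \<in> cdual"
  using assms unfolding cdual_def by blast

definition cextend :: "('a::real_normed_vector \<Rightarrow>\<^sub>L real) \<Rightarrow> 'a \<times> 'a \<Rightarrow> complex" where
  "cextend \<psi> p = Complex (\<psi> (fst p)) (\<psi> (snd p))"

lemma bounded_linear_cextend: "bounded_linear (cextend \<psi>)"
proof (rule bounded_linear_intro)
  show "cextend \<psi> (p + q) = cextend \<psi> p + cextend \<psi> q"
    and "cextend \<psi> (r *\<^sub>R p) = r *\<^sub>R cextend \<psi> p" for p q r
    by (simp_all add: cextend_def complex_eq_iff blinfun.add_right blinfun.scaleR_right)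
  show "norm (cextend \<psi> p) \<le> norm p * (2 * norm \<psi>)" for p
  proof -
    have "norm (fst p) \<le> norm p" "norm (snd p) \<le> norm p"
      using norm_fst_le[of "fst p" "snd p"] norm_snd_le[of "snd p" "fst p"] by simp_all
    then have "\<bar>\<psi> (fst p)\<bar> \<le> norm \<psi> * norm p" "\<bar>\<psi> (snd p)\<bar> \<le> norm \<psi> * norm p"
      using norm_blinfun[of \<psi> "fst p"] norm_blinfun[of \<psi> "snd p"]
        mult_left_mono[OF _ norm_ge_zero, of _ _ \<psi>] by (metis order_trans real_norm_def)+
    moreover have "cmod (cextend \<psi> p) \<le> \<bar>\<psi> (fst p)\<bar> + \<bar>\<psi> (snd p)\<bar>"
      using cmod_le[of "cextend \<psi> p"] by (simp add: cextend_def)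
    ultimately show ?thesis by (simp add: algebra_simps)
  qed
qed

lemma cextend_in_cdual: "cextend \<psi> \<in> (cdual :: ('a::banach_lattice \<times> 'a \<Rightarrow> complex) set)"
proof (rule cdualI)
  show "continuous_on UNIV (cextend \<psi>)"
    by (rule linear_continuous_on[OF bounded_linear_cextend])
  show "cextend \<psi> (x + y) = cextend \<psi> x + cextend \<psi> y" for x y
    using linear_add[OF bounded_linear.linear[OF bounded_linear_cextend]] .
  show "cextend \<psi> (cscale c x) = c * cextend \<psi> x" for c x
    by (cases x) (simp add: cextend_def cscale_def complex_eq_iff blinfun.diff_right
        blinfun.add_right blinfun.scaleR_right algebra_simps)
qed

lemma cextend_real [simp]: "cextend \<psi> (x, 0) = complex_of_real (\<psi> x)"
  by (simp add: cextend_def complex_eq_iff)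

lemma cmod_le_dmod:
  fixes F :: "'a::banach_lattice \<times> 'a \<Rightarrow> complex"
  assumes "bounded_linear F" and "0 \<le> x"
  shows "cmod (F (x, 0)) \<le> dmod F x"
  unfolding dmod_def
proof (rule cSup_upper)
  show "cmod (F (x, 0)) \<in> {cmod (F w) | w. lmod w \<le> x}"
    using assms(2) by (intro CollectI exI[of _ "(x, 0)"]) (simp add: lmod_real labs_of_nonneg)
  obtain K where K: "\<And>w. norm (F w) \<le> norm w * K" "0 < K"
    using bounded_linear.pos_bounded[OF assms(1)] by blast
  have "cmod (F w) \<le> 2 * norm x * K" if "lmod w \<le> x" for w
    using K norm_le_if_lmod_le[OF that] by (smt (verit) mult_right_mono)
  then show "bdd_above {cmod (F w) | w. lmod w \<le> x}"
    by (intro bdd_aboveI[of _ "2 * norm x * K"]) blast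
qed

lemma poscone_iff: "x \<in> poscone \<longleftrightarrow> (\<exists>f. x = (f, 0) \<and> 0 \<le> f)"
  by (auto simp: poscone_def)

lemma pos_functional_real:
  assumes "pos_functional \<phi>" and "0 \<le> f"
  shows "\<phi> (f, 0) = complex_of_real (Re (\<phi> (f, 0)))" and "0 \<le> Re (\<phi> (f, 0))"
  using assms unfolding pos_functional_def poscone_def by (auto simp: complex_eq_iff)

lemma tensor_real:
  "pos_functional \<phi> \<Longrightarrow> 0 \<le> f \<Longrightarrow> tensor u \<phi> (f, 0) = (Re (\<phi> (f, 0)) *\<^sub>R u, 0)"
  unfolding pos_functional_def poscone_def tensor_def cscale_def by auto

section \<open>Resolvents of real operators\<close>

locale real_operator =
  fixes D :: "('a::banach_lattice \<times> 'a) set" and A :: "'a \<times> 'a \<Rightarrow> 'a \<times> 'a"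
  assumes lin_op: "lin_op D A" and real_op: "real_op D A"
begin

lemma D_add: "x \<in> D \<Longrightarrow> y \<in> D \<Longrightarrow> x + y \<in> D"
  and A_add: "x \<in> D \<Longrightarrow> y \<in> D \<Longrightarrow> A (x + y) = A x + A y"
  and D_cscale: "x \<in> D \<Longrightarrow> cscale c x \<in> D"
  and A_cscale: "x \<in> D \<Longrightarrow> A (cscale c x) = cscale c (A x)"
  using lin_op unfolding lin_op_def by blast+

lemma D_scaleR: "x \<in> D \<Longrightarrow> r *\<^sub>R x \<in> D"
  and A_scaleR: "x \<in> D \<Longrightarrow> A (r *\<^sub>R x) = r *\<^sub>R A x"
  using D_cscale[of x "complex_of_real r"] A_cscale[of x "complex_of_real r"] by simp_all

abbreviation in_rho :: "real \<Rightarrow> bool" where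
  "in_rho \<mu> \<equiv> complex_of_real \<mu> \<in> resolvent_set D A"

abbreviation R :: "real \<Rightarrow> 'a \<times> 'a \<Rightarrow> 'a \<times> 'a" where
  "R \<mu> \<equiv> resolvent (complex_of_real \<mu>) D A"

context
  fixes \<mu> :: real
  assumes \<mu>: "in_rho \<mu>"
begin

lemma resolvent_eqI:
  assumes "x \<in> D" "\<mu> *\<^sub>R x - A x = y"
  shows "R \<mu> y = x"
  unfolding resolvent_def
proof (rule the_equality)
  show "x \<in> D \<and> cscale (complex_of_real \<mu>) x - A x = y" using assms by simp
  have "inj_on (\<lambda>x. cscale (complex_of_real \<mu>) x - A x) D"
    using \<mu> unfolding resolvent_set_def bij_betw_def by blast
  then show "z = x" if "z \<in> D \<and> cscale (complex_of_real \<mu>) z - A z = y" for z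
    using that assms unfolding inj_on_def by simp
qed

lemma resolvent_in_D: "R \<mu> y \<in> D"
  and resolvent_equation: "\<mu> *\<^sub>R R \<mu> y - A (R \<mu> y) = y"
proof -
  have "y \<in> (\<lambda>x. cscale (complex_of_real \<mu>) x - A x) ` D"
    using \<mu> unfolding resolvent_set_def bij_betw_def by blast
  then obtain x where "x \<in> D" "\<mu> *\<^sub>R x - A x = y" by auto
  with resolvent_eqI show "R \<mu> y \<in> D" "\<mu> *\<^sub>R R \<mu> y - A (R \<mu> y) = y" by simp_all
qed

lemma bounded_linear_resolvent: "bounded_linear (R \<mu>)"
proof -
  obtain K where K: "\<And>y. norm (R \<mu> y) \<le> K * norm y"
    using \<mu> unfolding resolvent_set_def by blast
  show ?thesis
  proof (rule bounded_linear_intro[of _ K])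
    show "R \<mu> (x + y) = R \<mu> x + R \<mu> y" for x y
    proof (rule resolvent_eqI)
      have "\<mu> *\<^sub>R (R \<mu> x + R \<mu> y) - A (R \<mu> x + R \<mu> y)
          = (\<mu> *\<^sub>R R \<mu> x - A (R \<mu> x)) + (\<mu> *\<^sub>R R \<mu> y - A (R \<mu> y))"
        using A_add[OF resolvent_in_D resolvent_in_D] by (simp add: algebra_simps)
      then show "\<mu> *\<^sub>R (R \<mu> x + R \<mu> y) - A (R \<mu> x + R \<mu> y) = x + y"
        by (simp only: resolvent_equation)
    qed (simp add: D_add resolvent_in_D)
    show "R \<mu> (r *\<^sub>R x) = r *\<^sub>R R \<mu> x" for r x
    proof (rule resolvent_eqI)
      have "\<mu> *\<^sub>R (r *\<^sub>R R \<mu> x) - A (r *\<^sub>R R \<mu> x) = r *\<^sub>R (\<mu> *\<^sub>R R \<mu> x - A (R \<mu> x))"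
        by (simp add: A_scaleR resolvent_in_D algebra_simps)
      then show "\<mu> *\<^sub>R (r *\<^sub>R R \<mu> x) - A (r *\<^sub>R R \<mu> x) = r *\<^sub>R x"
        by (simp only: resolvent_equation)
    qed (simp add: D_scaleR resolvent_in_D)
    show "norm (R \<mu> y) \<le> norm y * K" for y
      using K[of y] by (simp add: mult.commute)
  qed
qed

lemma resolvent_cscale: "R \<mu> (cscale c y) = cscale c (R \<mu> y)"
proof (rule resolvent_eqI)
  have "\<mu> *\<^sub>R cscale c (R \<mu> y) - A (cscale c (R \<mu> y)) = cscale c (\<mu> *\<^sub>R R \<mu> y - A (R \<mu> y))"
    by (simp add: A_cscale resolvent_in_D cscale_diff cscale_scaleR)
  then show "\<mu> *\<^sub>R cscale c (R \<mu> y) - A (cscale c (R \<mu> y)) = cscale c y"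
    by (simp only: resolvent_equation)
qed (simp add: D_cscale resolvent_in_D)

lemma resolvent_real: "snd (R \<mu> (f, 0)) = 0"
proof -
  \<comment> \<open>Write \<open>R(\<mu>) f = p + i q\<close> with \<open>p, q \<in> D \<inter> E\<^sub>\<real>\<close>; since \<open>A\<close> is real,
    \<open>(\<mu> - A) q\<close> is the imaginary part of \<open>f\<close>, so \<open>q = 0\<close>.\<close>
  have "R \<mu> (f, 0) \<in> {p + cscale \<i> q | p q. p \<in> D \<inter> realpart \<and> q \<in> D \<inter> realpart}"
    using real_op resolvent_in_D unfolding real_op_def by blast
  then obtain p q where pq: "R \<mu> (f, 0) = p + cscale \<i> q" "p \<in> D" "q \<in> D"
    and "p \<in> realpart" "q \<in> realpart"
    by blast
  moreover have "A p \<in> realpart" "A q \<in> realpart"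
    using real_op pq calculation unfolding real_op_def by blast+
  ultimately have real: "snd p = 0" "snd q = 0" "snd (A p) = 0" "snd (A q) = 0"
    unfolding realpart_def by auto
  let ?L = "\<lambda>x. \<mu> *\<^sub>R x - A x"
  have "?L (R \<mu> (f, 0)) = ?L p + cscale \<i> (?L q)"
    unfolding pq(1) using A_add[OF pq(2) D_cscale[OF pq(3)]] A_cscale[OF pq(3)]
    by (simp add: cscale_diff cscale_scaleR algebra_simps)
  then have "(f, 0) = ?L p + cscale \<i> (?L q)" by (simp only: resolvent_equation)
  then have "snd (?L p) + snd (cscale \<i> (?L q)) = 0" by (metis snd_add snd_conv)
  then have "fst (?L q) = 0"
    using real by (simp add: cscale_def)
  then have "?L q = 0" using real by (simp add: prod_eq_iff)
  then have "q = R \<mu> 0" using resolvent_eqI[OF pq(3)] by simp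
  then have "q = 0" using linear_0[OF bounded_linear.linear[OF bounded_linear_resolvent]] by simp
  then show ?thesis using pq real by simp
qed

end

definition Rr :: "real \<Rightarrow> 'a \<Rightarrow> 'a" where
  "Rr \<mu> f = fst (R \<mu> (f, 0))"

lemma resolvent_of_real: "in_rho \<mu> \<Longrightarrow> R \<mu> (f, 0) = (Rr \<mu> f, 0)"
  using resolvent_real by (simp add: Rr_def prod_eq_iff)

lemma bounded_linear_Rr: "in_rho \<mu> \<Longrightarrow> bounded_linear (Rr \<mu>)"
  unfolding Rr_def
  by (rule bounded_linear_compose[OF bounded_linear_fst bounded_linear_compose[OF
        bounded_linear_resolvent bounded_linear_Pair[OF bounded_linear_ident bounded_linear_zero]]])

lemma resolvent_identity:
  assumes \<nu>: "in_rho \<nu>" and \<mu>: "in_rho \<mu>"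
  shows "R \<nu> y = R \<mu> y + (\<mu> - \<nu>) *\<^sub>R R \<nu> (R \<mu> y)"
proof (rule resolvent_eqI[OF \<nu>])
  let ?x = "R \<mu> y" and ?z = "R \<nu> (R \<mu> y)"
  have D: "?x \<in> D" "?z \<in> D" using resolvent_in_D \<mu> \<nu> by blast+
  then show "?x + (\<mu> - \<nu>) *\<^sub>R ?z \<in> D" by (intro D_add D_scaleR)
  have "A (?x + (\<mu> - \<nu>) *\<^sub>R ?z) = A ?x + (\<mu> - \<nu>) *\<^sub>R A ?z"
    using A_add[OF D(1) D_scaleR[OF D(2)]] A_scaleR[OF D(2)] by simp
  also have "\<dots> = (\<mu> *\<^sub>R ?x - y) + (\<mu> - \<nu>) *\<^sub>R (\<nu> *\<^sub>R ?z - ?x)"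
    using resolvent_equation[OF \<mu>, of y] resolvent_equation[OF \<nu>, of ?x]
    by (simp add: algebra_simps)
  finally show "\<nu> *\<^sub>R (?x + (\<mu> - \<nu>) *\<^sub>R ?z) - A (?x + (\<mu> - \<nu>) *\<^sub>R ?z) = y"
    by (simp add: algebra_simps)
qed

lemma Rr_identity:
  "in_rho \<nu> \<Longrightarrow> in_rho \<mu> \<Longrightarrow> Rr \<nu> f = Rr \<mu> f + (\<mu> - \<nu>) *\<^sub>R Rr \<nu> (Rr \<mu> f)"
  using resolvent_identity[of \<nu> \<mu> "(f, 0)"] by (simp add: resolvent_of_real)

text \<open>For \<open>\<Psi> \<in> E'\<close>, \<open>A' (\<Psi> \<circ> R \<mu>) = \<mu> (\<Psi> \<circ> R \<mu>) - \<Psi>\<close>.\<close>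

lemma cdual_comp_resolvent_in_adj_dom:
  assumes \<mu>: "in_rho \<mu>" and \<Psi>: "\<Psi> \<in> cdual"
  shows "(\<lambda>p. \<Psi> (R \<mu> p)) \<in> adj_dom D A"
proof -
  have lin: "linear (R \<mu>)" using bounded_linear_resolvent[OF \<mu>] by (rule bounded_linear.linear)
  have cont: "continuous_on UNIV (\<lambda>p. \<Psi> (R \<mu> p))"
    using continuous_on_compose2[OF cdual_continuous[OF \<Psi>]
        linear_continuous_on[OF bounded_linear_resolvent[OF \<mu>]]] by simp
  have F: "(\<lambda>p. \<Psi> (R \<mu> p)) \<in> cdual"
    using cont by (rule cdualI)
      (simp_all add: linear_add[OF lin] cdual_add[OF \<Psi>] resolvent_cscale[OF \<mu>] cdual_cscale[OF \<Psi>])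
  have G: "(\<lambda>p. complex_of_real \<mu> * \<Psi> (R \<mu> p) - \<Psi> p) \<in> cdual"
    using continuous_on_diff[OF continuous_on_mult[OF continuous_on_const cont] cdual_continuous[OF \<Psi>]]
    by (rule cdualI)
      (simp_all add: linear_add[OF lin] cdual_add[OF \<Psi>] resolvent_cscale[OF \<mu>]
        cdual_cscale[OF \<Psi>] algebra_simps)
  have "\<Psi> (R \<mu> (A x)) = complex_of_real \<mu> * \<Psi> (R \<mu> x) - \<Psi> x" if "x \<in> D" for x
  proof -
    have "R \<mu> (A x) = R \<mu> (\<mu> *\<^sub>R x) - R \<mu> (\<mu> *\<^sub>R x - A x)"
      using linear_diff[OF lin, of "\<mu> *\<^sub>R x" "A x"] by simp
    also have "\<dots> = \<mu> *\<^sub>R R \<mu> x - x"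
      using linear_scale[OF lin] resolvent_eqI[OF \<mu> that refl] by simp
    finally show ?thesis by (simp add: cdual_diff[OF \<Psi>] cdual_scaleR[OF \<Psi>])
  qed
  then show ?thesis
    unfolding adj_dom_def using F by (intro CollectI conjI bexI[OF _ G] ballI)
qed

lemma Rr_bounded_by_u:
  assumes \<nu>: "in_rho \<nu>" and u: "0 \<le> u" and D_u: "D \<subseteq> pideal u"
  shows "\<exists>C\<ge>0. \<forall>g. labs (Rr \<nu> g) \<le> (C * norm g) *\<^sub>R u"
proof (rule uniform_bound_from_closed_cover)
  have lin: "linear (Rr \<nu>)" using bounded_linear_Rr[OF \<nu>] by (rule bounded_linear.linear)
  have cont: "continuous_on UNIV (Rr \<nu>)" by (rule linear_continuous_on[OF bounded_linear_Rr[OF \<nu>]])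
  show "closed {g. labs (Rr \<nu> g) \<le> real n *\<^sub>R u}" for n
    unfolding labs_le_iff Collect_conj_eq
    by (intro closed_Int closed_Collect_le_lattice cont continuous_on_minus continuous_on_const)
  show "\<exists>n. labs (Rr \<nu> g) \<le> real n *\<^sub>R u" for g
  proof -
    obtain c where "lmod (R \<nu> (g, 0)) \<le> c *\<^sub>R u"
      using D_u resolvent_in_D[OF \<nu>] unfolding pideal_def by blast
    then have "labs (Rr \<nu> g) \<le> c *\<^sub>R u" by (simp add: resolvent_of_real[OF \<nu>] lmod_real)
    also have "\<dots> \<le> real (nat \<lceil>c\<rceil>) *\<^sub>R u" using u by (intro scaleR_right_mono) linarith
    finally show ?thesis ..
  qed
  show "labs (Rr \<nu> (x - y)) \<le> (a + b) *\<^sub>R u"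
    if "labs (Rr \<nu> x) \<le> a *\<^sub>R u" "labs (Rr \<nu> y) \<le> b *\<^sub>R u" for a b x y
  proof -
    have "labs (Rr \<nu> (x - y)) \<le> labs (Rr \<nu> x) + labs (- Rr \<nu> y)"
      unfolding linear_diff[OF lin] by (metis diff_conv_add_uminus labs_triangle)
    also have "\<dots> \<le> (a + b) *\<^sub>R u"
      using that by (simp add: labs_minus scaleR_add_left add_mono)
    finally show ?thesis .
  qed
  show "labs (Rr \<nu> (t *\<^sub>R x)) \<le> (t * a) *\<^sub>R u"
    if "0 < t" "labs (Rr \<nu> x) \<le> a *\<^sub>R u" for a t x
    using that scaleR_left_mono[OF that(2), of t]
    by (simp add: linear_scale[OF lin] labs_scaleR)
  show "labs (Rr \<nu> 0) \<le> 0 *\<^sub>R u" by (simp add: linear_0[OF lin])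
qed

lemma functional_Rr_bounded_by_phi:
  assumes \<mu>: "in_rho \<mu>" and adj: "adj_dom D A \<subseteq> dual_pideal \<phi>"
  shows "\<exists>c. \<forall>f\<ge>0. \<bar>blinfun_apply \<psi> (Rr \<mu> f)\<bar> \<le> c * Re (\<phi> (f, 0))"
proof -
  let ?F = "\<lambda>p. cextend \<psi> (R \<mu> p)"
  have "?F \<in> dual_pideal \<phi>"
    using adj cdual_comp_resolvent_in_adj_dom[OF \<mu> cextend_in_cdual] by blast
  then obtain c where c: "\<And>f. 0 \<le> f \<Longrightarrow> dmod ?F f \<le> c * Re (\<phi> (f, 0))"
    unfolding dual_pideal_def by blast
  have "\<bar>blinfun_apply \<psi> (Rr \<mu> f)\<bar> \<le> c * Re (\<phi> (f, 0))" if "0 \<le> f" for f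
  proof -
    have "\<bar>blinfun_apply \<psi> (Rr \<mu> f)\<bar> = cmod (?F (f, 0))" by (simp add: resolvent_of_real[OF \<mu>])
    also have "\<dots> \<le> dmod ?F f"
      using bounded_linear_compose[OF bounded_linear_cextend bounded_linear_resolvent[OF \<mu>]] that
      by (rule cmod_le_dmod)
    finally show ?thesis using c[OF that] by linarith
  qed
  then show ?thesis by blast
qed

lemma functional_Rr_uniformly_bounded_by_phi:
  assumes \<mu>: "in_rho \<mu>" and adj: "adj_dom D A \<subseteq> dual_pideal \<phi>" and \<phi>: "pos_functional \<phi>"
  shows "\<exists>C\<ge>0. \<forall>\<psi> :: 'a \<Rightarrow>\<^sub>L real. \<forall>f\<ge>0.
           \<bar>blinfun_apply \<psi> (Rr \<mu> f)\<bar> \<le> C * norm \<psi> * Re (\<phi> (f, 0))"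
proof -
  note \<phi>_nonneg = pos_functional_real(2)[OF \<phi>]
  let ?P = "\<lambda>a (\<psi> :: 'a \<Rightarrow>\<^sub>L real). \<forall>f\<ge>0. \<bar>blinfun_apply \<psi> (Rr \<mu> f)\<bar> \<le> a * Re (\<phi> (f, 0))"
  have "\<exists>C\<ge>0. \<forall>\<psi>. ?P (C * norm \<psi>) \<psi>"
  proof (rule uniform_bound_from_closed_cover)
    show "closed {\<psi>. ?P (real n) \<psi>}" for n
    proof -
      have "{\<psi>. ?P (real n) \<psi>}
          = (\<Inter>f\<in>{f. 0 \<le> f}. {\<psi>. \<bar>blinfun_apply \<psi> (Rr \<mu> f)\<bar> \<le> real n * Re (\<phi> (f, 0))})"
        by auto
      then show ?thesis by (simp add: closed_INT closed_Collect_le continuous_intros)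
    qed
    show "\<exists>n. ?P (real n) \<psi>" for \<psi>
    proof -
      obtain c where "?P c \<psi>" using functional_Rr_bounded_by_phi[OF \<mu> adj] by blast
      then have "?P (real (nat \<lceil>c\<rceil>)) \<psi>"
        using \<phi>_nonneg by (smt (verit) mult_right_mono real_nat_ceiling_ge)
      then show ?thesis ..
    qed
    show "?P (a + b) (\<psi> - \<psi>')" if "?P a \<psi>" "?P b \<psi>'" for a b \<psi> \<psi>'
    proof (intro allI impI)
      fix f :: 'a assume "0 \<le> f"
      then show "\<bar>blinfun_apply (\<psi> - \<psi>') (Rr \<mu> f)\<bar> \<le> (a + b) * Re (\<phi> (f, 0))"
        using that abs_triangle_ineq4[of "blinfun_apply \<psi> (Rr \<mu> f)" "blinfun_apply \<psi>' (Rr \<mu> f)"]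
        by (fastforce simp: minus_blinfun.rep_eq distrib_right)
    qed
    show "?P (t * a) (t *\<^sub>R \<psi>)" if "0 < t" "?P a \<psi>" for a t \<psi>
      using that by (auto simp: scaleR_blinfun.rep_eq abs_mult mult.assoc intro: mult_left_mono)
  qed (simp add: \<phi>_nonneg)
  then show ?thesis by simp
qed

lemma Rr_norm_bounded_by_phi:
  assumes \<mu>: "in_rho \<mu>" and adj: "adj_dom D A \<subseteq> dual_pideal \<phi>" and \<phi>: "pos_functional \<phi>"
  shows "\<exists>C\<ge>0. \<forall>f\<ge>0. norm (Rr \<mu> f) \<le> C * Re (\<phi> (f, 0))"
proof -
  obtain C where C: "C \<ge> 0"
    "\<And>\<psi> f. 0 \<le> f \<Longrightarrow> \<bar>blinfun_apply \<psi> (Rr \<mu> f)\<bar> \<le> C * norm \<psi> * Re (\<phi> (f, 0))"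
    using functional_Rr_uniformly_bounded_by_phi[OF \<mu> adj \<phi>] by blast
  have "norm (Rr \<mu> f) \<le> C * Re (\<phi> (f, 0))" if "0 \<le> f" for f
  proof -
    obtain \<psi> :: "'a \<Rightarrow>\<^sub>L real" where \<psi>: "norm \<psi> \<le> 1" "blinfun_apply \<psi> (Rr \<mu> f) = norm (Rr \<mu> f)"
      using ex_norming_functional by blast
    have "norm (Rr \<mu> f) \<le> C * norm \<psi> * Re (\<phi> (f, 0))" using C(2)[OF that, of \<psi>] \<psi>(2) by simp
    also have "\<dots> \<le> C * Re (\<phi> (f, 0))"
      using mult_right_mono[OF mult_left_le[OF \<psi>(1) C(1)] pos_functional_real(2)[OF \<phi> that]] .
    finally show ?thesis .
  qed
  then show ?thesis using C(1) by blast
qed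

lemma resolvent_product_dominated:
  assumes \<mu>: "in_rho \<mu>" and \<nu>: "in_rho \<nu>" and u: "0 \<le> u" and D_u: "D \<subseteq> pideal u"
    and adj: "adj_dom D A \<subseteq> dual_pideal \<phi>" and \<phi>: "pos_functional \<phi>"
  shows "\<exists>M. \<forall>f\<ge>0. labs (Rr \<nu> (Rr \<mu> f)) \<le> (M * Re (\<phi> (f, 0))) *\<^sub>R u"
proof -
  obtain C\<^sub>u where C\<^sub>u: "C\<^sub>u \<ge> 0" "\<And>g. labs (Rr \<nu> g) \<le> (C\<^sub>u * norm g) *\<^sub>R u"
    using Rr_bounded_by_u[OF \<nu> u D_u] by blast
  obtain C\<^sub>\<phi> where C\<^sub>\<phi>: "\<And>f. 0 \<le> f \<Longrightarrow> norm (Rr \<mu> f) \<le> C\<^sub>\<phi> * Re (\<phi> (f, 0))"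
    using Rr_norm_bounded_by_phi[OF \<mu> adj \<phi>] by blast
  have "labs (Rr \<nu> (Rr \<mu> f)) \<le> (C\<^sub>u * C\<^sub>\<phi> * Re (\<phi> (f, 0))) *\<^sub>R u" if "0 \<le> f" for f
  proof -
    have "labs (Rr \<nu> (Rr \<mu> f)) \<le> (C\<^sub>u * norm (Rr \<mu> f)) *\<^sub>R u" by (rule C\<^sub>u(2))
    also have "\<dots> \<le> (C\<^sub>u * (C\<^sub>\<phi> * Re (\<phi> (f, 0)))) *\<^sub>R u"
      using C\<^sub>\<phi>[OF that] C\<^sub>u(1) u by (intro scaleR_right_mono mult_left_mono)
    finally show ?thesis by (simp add: mult.assoc)
  qed
  then show ?thesis by blast
qed

lemma op_succeq_tensor_resolvent_iff:
  assumes \<mu>: "in_rho \<mu>" and \<phi>: "pos_functional \<phi>" and u: "0 \<le> u"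
  shows "op_succeq (tensor u \<phi>) (R \<mu>) \<longleftrightarrow> (\<exists>C. \<forall>f\<ge>0. Rr \<mu> f \<le> (C * Re (\<phi> (f, 0))) *\<^sub>R u)"
proof -
  have "op_succeq (tensor u \<phi>) (R \<mu>) \<longleftrightarrow>
      (\<exists>c>0. \<forall>f\<in>{f. 0 \<le> f}. c *\<^sub>R Rr \<mu> f \<le> Re (\<phi> (f, 0)) *\<^sub>R u)"
    unfolding op_succeq_def poscone_iff
    by (auto simp: tensor_real[OF \<phi>] resolvent_of_real[OF \<mu>] poscone_def)
  also have "\<dots> \<longleftrightarrow> (\<exists>C. \<forall>f\<in>{f. 0 \<le> f}. Rr \<mu> f \<le> C *\<^sub>R (Re (\<phi> (f, 0)) *\<^sub>R u))"
    using pos_functional_real(2)[OF \<phi>] u by (intro ex_pos_scale_le_iff scaleR_nonneg_nonneg) auto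
  finally show ?thesis by simp
qed

lemma op_succeq_resolvent_neg_tensor_iff:
  assumes \<mu>: "in_rho \<mu>" and \<phi>: "pos_functional \<phi>" and u: "0 \<le> u"
  shows "op_succeq (R \<mu>) (\<lambda>x. - tensor u \<phi> x) \<longleftrightarrow> (\<exists>C. \<forall>f\<ge>0. - Rr \<mu> f \<le> (C * Re (\<phi> (f, 0))) *\<^sub>R u)"
proof -
  have nonneg_add_iff: "0 \<le> x + y \<longleftrightarrow> - x \<le> y" for x y :: 'a
    using diff_ge_0_iff_ge[of y "- x"] by (simp add: add.commute)
  have "op_succeq (R \<mu>) (\<lambda>x. - tensor u \<phi> x) \<longleftrightarrow>
      (\<exists>C>0. \<forall>f\<in>{f. 0 \<le> f}. - Rr \<mu> f \<le> C *\<^sub>R (Re (\<phi> (f, 0)) *\<^sub>R u))"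
    unfolding op_succeq_def poscone_iff
    by (auto simp: tensor_real[OF \<phi>] resolvent_of_real[OF \<mu>] poscone_def nonneg_add_iff)
  also have "\<dots> \<longleftrightarrow> (\<exists>C. \<forall>f\<in>{f. 0 \<le> f}. - Rr \<mu> f \<le> C *\<^sub>R (Re (\<phi> (f, 0)) *\<^sub>R u))"
    using pos_functional_real(2)[OF \<phi>] u by (intro ex_pos_bound_iff scaleR_nonneg_nonneg) auto
  finally show ?thesis by simp
qed

lemma op_succeq_resolvent_transfer:
  assumes \<mu>: "in_rho \<mu>" and \<nu>: "in_rho \<nu>" and u: "0 \<le> u" and D_u: "D \<subseteq> pideal u"
    and adj: "adj_dom D A \<subseteq> dual_pideal \<phi>" and \<phi>: "pos_functional \<phi>"
  shows "op_succeq (tensor u \<phi>) (R \<mu>) \<Longrightarrow> op_succeq (tensor u \<phi>) (R \<nu>)"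
    and "op_succeq (R \<mu>) (\<lambda>x. - tensor u \<phi> x) \<Longrightarrow> op_succeq (R \<nu>) (\<lambda>x. - tensor u \<phi> x)"
proof -
  obtain M where M: "\<And>f. 0 \<le> f \<Longrightarrow> labs (Rr \<nu> (Rr \<mu> f)) \<le> (M * Re (\<phi> (f, 0))) *\<^sub>R u"
    using resolvent_product_dominated[OF \<mu> \<nu> u D_u adj \<phi>] by blast
  have "Rr \<nu> f \<le> ((C + \<bar>\<mu> - \<nu>\<bar> * M) * Re (\<phi> (f, 0))) *\<^sub>R u"
    if "0 \<le> f" "Rr \<mu> f \<le> (C * Re (\<phi> (f, 0))) *\<^sub>R u" for C f
  proof -
    have "Rr \<nu> f = Rr \<mu> f + (\<mu> - \<nu>) *\<^sub>R Rr \<nu> (Rr \<mu> f)" by (rule Rr_identity[OF \<nu> \<mu>])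
    also have "\<dots> \<le> (C * Re (\<phi> (f, 0)) + \<bar>\<mu> - \<nu>\<bar> * (M * Re (\<phi> (f, 0)))) *\<^sub>R u"
      by (rule upper_bound_perturb[OF that(2) M[OF that(1)]])
    finally show ?thesis by (simp add: algebra_simps)
  qed
  then show "op_succeq (tensor u \<phi>) (R \<mu>) \<Longrightarrow> op_succeq (tensor u \<phi>) (R \<nu>)"
    unfolding op_succeq_tensor_resolvent_iff[OF \<mu> \<phi> u] op_succeq_tensor_resolvent_iff[OF \<nu> \<phi> u]
    by blast
  have "- Rr \<nu> f \<le> ((C + \<bar>\<mu> - \<nu>\<bar> * M) * Re (\<phi> (f, 0))) *\<^sub>R u"
    if "0 \<le> f" "- Rr \<mu> f \<le> (C * Re (\<phi> (f, 0))) *\<^sub>R u" for C f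
  proof -
    have "- Rr \<nu> f = - Rr \<mu> f + (\<mu> - \<nu>) *\<^sub>R (- Rr \<nu> (Rr \<mu> f))"
      by (simp add: Rr_identity[OF \<nu> \<mu>, of f])
    also have "\<dots> \<le> (C * Re (\<phi> (f, 0)) + \<bar>\<mu> - \<nu>\<bar> * (M * Re (\<phi> (f, 0)))) *\<^sub>R u"
      using M[OF that(1)] by (intro upper_bound_perturb[OF that(2)]) (simp add: labs_minus)
    finally show ?thesis by (simp add: algebra_simps)
  qed
  then show "op_succeq (R \<mu>) (\<lambda>x. - tensor u \<phi> x) \<Longrightarrow> op_succeq (R \<nu>) (\<lambda>x. - tensor u \<phi> x)"
    unfolding op_succeq_resolvent_neg_tensor_iff[OF \<mu> \<phi> u]
      op_succeq_resolvent_neg_tensor_iff[OF \<nu> \<phi> u]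
    by blast
qed

end

theorem proposition4p7:
  fixes D :: "('a::banach_lattice \<times> 'a) set"
    and A :: "'a \<times> 'a \<Rightarrow> 'a \<times> 'a"
    and u :: 'a
    and \<phi> :: "'a \<times> 'a \<Rightarrow> complex"
    and \<mu>\<^sub>0 :: real
  assumes "lin_op D A"
    and "densely_defined D"
    and "closed_op D A"
    and "real_op D A"
    and "0 \<le> u"
    and "pos_functional \<phi>"
    and "strictly_pos \<phi>"
    and "D \<subseteq> pideal u"
    and "adj_dom D A \<subseteq> dual_pideal \<phi>"
    and "complex_of_real \<mu>\<^sub>0 \<in> resolvent_set D A"
  shows "(op_succeq (resolvent (complex_of_real \<mu>\<^sub>0) D A) (\<lambda>x. - tensor u \<phi> x) \<longleftrightarrow>
           (\<forall>\<mu>::real. complex_of_real \<mu> \<in> resolvent_set D A \<longrightarrow>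
              op_succeq (resolvent (complex_of_real \<mu>) D A) (\<lambda>x. - tensor u \<phi> x)))
       \<and> (op_succeq (tensor u \<phi>) (resolvent (complex_of_real \<mu>\<^sub>0) D A) \<longleftrightarrow>
           (\<forall>\<mu>::real. complex_of_real \<mu> \<in> resolvent_set D A \<longrightarrow>
              op_succeq (tensor u \<phi>) (resolvent (complex_of_real \<mu>) D A)))"
proof -
  interpret real_operator D A
    using assms(1,4) by unfold_locales
  note transfer = op_succeq_resolvent_transfer[OF assms(10) _ assms(5,8,9,6)]
  show ?thesis
  proof (intro conjI iffI allI impI)
    show "op_succeq (R \<mu>) (\<lambda>x. - tensor u \<phi> x)"
      if "op_succeq (R \<mu>\<^sub>0) (\<lambda>x. - tensor u \<phi> x)" "in_rho \<mu>" for \<mu>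
      using transfer(2)[OF that(2) that(1)] .
    show "op_succeq (tensor u \<phi>) (R \<mu>)"
      if "op_succeq (tensor u \<phi>) (R \<mu>\<^sub>0)" "in_rho \<mu>" for \<mu>
      using transfer(1)[OF that(2) that(1)] .
  qed (use assms(10) in blast)+
qed

end
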